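(* Let $A$ and $B$ be rings, $f: A\to B$ a ring homomorphism and $J$ a proper ideal of $B$ such that $f^{-1}(J)\subseteq \mathrm{nil}(A)$. Then $A\bowtie^{f}J$ is a nil-Armendariz ring if and only if $f(A)+J$ is a nil-Armendariz ring.
   Context: All rings are associative with identity (not necessarily commutative), ring homomorphisms are unital, and ideals are two-sided. $\mathrm{nil}(R)$ denotes the set of nilpotent elements of a ring $R$, and $\mathrm{nil}(R)[x]$ the set of polynomials all of whose coefficients lie in $\mathrm{nil}(R)$. For a ring homomorphism $f:A\to B$ and an ideal $J$ of $B$, the amalgamation is the subring $A\bowtie^{f}J=\{(a,f(a)+j)\mid a\in A,\ j\in J\}$ of $A\times B$; $f(A)+J=\{f(a)+j: a\in A, j\in J\}$ is a subring of $B$. A ring $R$ is nil-Armendariz if whenever $p(x)=\sum_{i=0}^n a_ix^i$ and $q(x)=\sum_{j=0}^m b_jx^j$ in $R[x]$ satisfy $p(x)q(x)\in\mathrm{nil}(R)[x]$, then $a_ib_j\in\mathrm{nil}(R)$ for all $i,j$. *)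

theory Defs
  imports "HOL-Algebra.Algebra"
begin

definition nilpotents :: "('a, 'm) ring_scheme \<Rightarrow> 'a set" where
  "nilpotents R = {x \<in> carrier R. \<exists>n::nat. x [^]\<^bsub>R\<^esub> n = \<zero>\<^bsub>R\<^esub>}"

definition nil_Armendariz :: "('a, 'm) ring_scheme \<Rightarrow> bool" where
  "nil_Armendariz R \<longleftrightarrow>
     (\<forall>p \<in> carrier (UP R). \<forall>q \<in> carrier (UP R).
        (\<forall>k. coeff (UP R) (p \<otimes>\<^bsub>UP R\<^esub> q) k \<in> nilpotents R) \<longrightarrow>
        (\<forall>i j. coeff (UP R) p i \<otimes>\<^bsub>R\<^esub> coeff (UP R) q j \<in> nilpotents R))"

definition amalgamation ::
  "('a, 'm) ring_scheme \<Rightarrow> ('b, 'n) ring_scheme \<Rightarrow> ('a \<Rightarrow> 'b) \<Rightarrow> 'b set \<Rightarrow> ('a \<times> 'b) ring" where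
  "amalgamation A B f J =
     (RDirProd A B)\<lparr>carrier := {(a, f a \<oplus>\<^bsub>B\<^esub> j) | a j. a \<in> carrier A \<and> j \<in> J}\<rparr>"

definition image_plus_ideal ::
  "('a, 'm) ring_scheme \<Rightarrow> ('b, 'n) ring_scheme \<Rightarrow> ('a \<Rightarrow> 'b) \<Rightarrow> 'b set \<Rightarrow> ('b, 'n) ring_scheme" where
  "image_plus_ideal A B f J = B\<lparr>carrier := {f a \<oplus>\<^bsub>B\<^esub> j | a j. a \<in> carrier A \<and> j \<in> J}\<rparr>"

end

theory Submission
  imports Defs
begin

text \<open>
  The second projection \<open>snd : A \<bowtie>\<^sup>f J \<rightarrow> f(A) + J\<close> is a surjective ring homomorphism,
  and it reflects nilpotency: if \<open>(f a + j)\<^sup>n = 0\<close> then \<open>f(a\<^sup>n) \<in> J\<close>, so \<open>a\<^sup>n\<close> and hence \<open>a\<close>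
  is nilpotent, and then so is \<open>(a, f a + j)\<close>. Applying a homomorphism coefficientwise to
  polynomials commutes with multiplication, so the nil-Armendariz property passes in both
  directions along any surjective ring homomorphism reflecting nilpotency.
\<close>

lemma (in ring_hom_ring) hom_nilpotents:
  assumes "x \<in> nilpotents R"
  shows "h x \<in> nilpotents S"
proof -
  from assms obtain n :: nat where x: "x \<in> carrier R" and "x [^]\<^bsub>R\<^esub> n = \<zero>\<^bsub>R\<^esub>"
    unfolding nilpotents_def by auto
  then have "h x [^]\<^bsub>S\<^esub> n = \<zero>\<^bsub>S\<^esub>"
    by (metis hom_nat_pow hom_zero)
  with x show ?thesis
    unfolding nilpotents_def by auto
qed

lemma coeff_UP: "p \<in> carrier (UP R) \<Longrightarrow> coeff (UP R) p n = p n"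
  by (simp add: UP_def)

lemma (in ring_hom_ring) comp_UP_closed:
  assumes "p \<in> carrier (UP R)"
  shows "h \<circ> p \<in> carrier (UP S)"
proof -
  from assms obtain n where "bound \<zero>\<^bsub>R\<^esub> n p"
    by (auto simp: UP_def)
  then have "bound \<zero>\<^bsub>S\<^esub> n (h \<circ> p)"
    by (auto simp: bound_def)
  moreover have "(h \<circ> p) i \<in> carrier S" for i
    using assms by (simp add: UP_def mem_upD)
  ultimately have "h \<circ> p \<in> up S"
    by (intro mem_upI) blast+
  then show ?thesis
    by (simp add: UP_def)
qed

lemma coeff_comp:
  assumes "ring_hom_ring R S h" and "p \<in> carrier (UP R)"
  shows "coeff (UP S) (h \<circ> p) n = h (coeff (UP R) p n)"
  using assms by (simp add: coeff_UP ring_hom_ring.comp_UP_closed)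

lemma coeff_comp_mult:
  assumes h: "ring_hom_ring R S h" and p: "p \<in> carrier (UP R)" and q: "q \<in> carrier (UP R)"
  shows "coeff (UP S) ((h \<circ> p) \<otimes>\<^bsub>UP S\<^esub> (h \<circ> q)) k = h (coeff (UP R) (p \<otimes>\<^bsub>UP R\<^esub> q) k)"
proof -
  interpret h: ring_hom_ring R S h by fact
  interpret UR: UP_ring R "UP R" by unfold_locales
  interpret US: UP_ring S "UP S" by unfold_locales
  have "h (coeff (UP R) (p \<otimes>\<^bsub>UP R\<^esub> q) k)
      = h (\<Oplus>\<^bsub>R\<^esub>i \<in> {..k}. coeff (UP R) p i \<otimes>\<^bsub>R\<^esub> coeff (UP R) q (k - i))"
    using p q by (simp only: UR.coeff_mult)
  also have "\<dots> = (\<Oplus>\<^bsub>S\<^esub>i \<in> {..k}. h (coeff (UP R) p i) \<otimes>\<^bsub>S\<^esub> h (coeff (UP R) q (k - i)))"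
    using p q by (simp add: comp_def)
  also have "\<dots> = coeff (UP S) ((h \<circ> p) \<otimes>\<^bsub>UP S\<^esub> (h \<circ> q)) k"
    using p q by (simp add: US.coeff_mult h.comp_UP_closed coeff_comp[OF h])
  finally show ?thesis ..
qed

lemma (in ring_hom_ring) comp_UP_surj:
  assumes surj: "h ` carrier R = carrier S" and P: "P \<in> carrier (UP S)"
  obtains p where "p \<in> carrier (UP R)" and "h \<circ> p = P"
proof -
  from P obtain n where bound: "bound \<zero>\<^bsub>S\<^esub> n P"
    by (auto simp: UP_def)
  have "P i \<in> h ` carrier R" for i
    using P surj by (simp add: UP_def mem_upD)
  then have preimage: "\<exists>x. x \<in> carrier R \<and> h x = P i" for i
    by (metis imageE)
  \<comment> \<open>zero coefficients are lifted to zero, so that the degree bound of \<open>P\<close> carries over\<close>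
  define p where "p i = (if P i = \<zero>\<^bsub>S\<^esub> then \<zero>\<^bsub>R\<^esub> else (SOME x. x \<in> carrier R \<and> h x = P i))" for i
  have p_lifts: "p i \<in> carrier R \<and> h (p i) = P i" for i
    using someI_ex[OF preimage[of i]] by (simp add: p_def)
  have "bound \<zero>\<^bsub>R\<^esub> n p"
    using bound by (simp add: bound_def p_def)
  with p_lifts have "p \<in> carrier (UP R)"
    unfolding UP_def by (auto intro!: mem_upI)
  moreover have "h \<circ> p = P"
    using p_lifts by (simp add: fun_eq_iff)
  ultimately show thesis
    by (rule that)
qed

lemma nil_Armendariz_surj_hom_image:
  assumes h: "ring_hom_ring R S h" and R: "nil_Armendariz R"
    and surj: "h ` carrier R = carrier S"
    and reflect: "\<And>x. x \<in> carrier R \<Longrightarrow> h x \<in> nilpotents S \<Longrightarrow> x \<in> nilpotents R"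
  shows "nil_Armendariz S"
  unfolding nil_Armendariz_def
proof (intro ballI impI allI)
  interpret h: ring_hom_ring R S h by fact
  interpret UR: UP_ring R "UP R" by unfold_locales
  fix P Q i j
  assume P: "P \<in> carrier (UP S)" and Q: "Q \<in> carrier (UP S)"
    and PQ: "\<forall>k. coeff (UP S) (P \<otimes>\<^bsub>UP S\<^esub> Q) k \<in> nilpotents S"
  obtain p where p: "p \<in> carrier (UP R)" and P_eq: "h \<circ> p = P"
    using h.comp_UP_surj[OF surj P] .
  obtain q where q: "q \<in> carrier (UP R)" and Q_eq: "h \<circ> q = Q"
    using h.comp_UP_surj[OF surj Q] .
  have "coeff (UP R) (p \<otimes>\<^bsub>UP R\<^esub> q) k \<in> nilpotents R" for k
  proof (rule reflect)
    show "coeff (UP R) (p \<otimes>\<^bsub>UP R\<^esub> q) k \<in> carrier R"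
      using p q by (meson UR.UP_mult_closed UR.coeff_closed)
    show "h (coeff (UP R) (p \<otimes>\<^bsub>UP R\<^esub> q) k) \<in> nilpotents S"
      using PQ coeff_comp_mult[OF h p q, of k] unfolding P_eq Q_eq by metis
  qed
  with R p q have "coeff (UP R) p i \<otimes>\<^bsub>R\<^esub> coeff (UP R) q j \<in> nilpotents R"
    unfolding nil_Armendariz_def by blast
  then have "h (coeff (UP R) p i \<otimes>\<^bsub>R\<^esub> coeff (UP R) q j) \<in> nilpotents S"
    by (rule h.hom_nilpotents)
  then show "coeff (UP S) P i \<otimes>\<^bsub>S\<^esub> coeff (UP S) Q j \<in> nilpotents S"
    using p q by (simp add: coeff_comp[OF h] UR.coeff_closed flip: P_eq Q_eq)
qed

lemma nil_Armendariz_of_hom_reflecting_nilpotents: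
  assumes h: "ring_hom_ring R S h" and S: "nil_Armendariz S"
    and reflect: "\<And>x. x \<in> carrier R \<Longrightarrow> h x \<in> nilpotents S \<Longrightarrow> x \<in> nilpotents R"
  shows "nil_Armendariz R"
  unfolding nil_Armendariz_def
proof (intro ballI impI allI)
  interpret h: ring_hom_ring R S h by fact
  interpret UR: UP_ring R "UP R" by unfold_locales
  fix p q i j
  assume p: "p \<in> carrier (UP R)" and q: "q \<in> carrier (UP R)"
    and pq: "\<forall>k. coeff (UP R) (p \<otimes>\<^bsub>UP R\<^esub> q) k \<in> nilpotents R"
  have "coeff (UP S) ((h \<circ> p) \<otimes>\<^bsub>UP S\<^esub> (h \<circ> q)) k \<in> nilpotents S" for k
    using pq coeff_comp_mult[OF h p q] h.hom_nilpotents by simp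
  with S have "coeff (UP S) (h \<circ> p) i \<otimes>\<^bsub>S\<^esub> coeff (UP S) (h \<circ> q) j \<in> nilpotents S"
    using h.comp_UP_closed p q unfolding nil_Armendariz_def by blast
  then have "h (coeff (UP R) p i \<otimes>\<^bsub>R\<^esub> coeff (UP R) q j) \<in> nilpotents S"
    using p q by (simp add: coeff_comp[OF h] UR.coeff_closed)
  then show "coeff (UP R) p i \<otimes>\<^bsub>R\<^esub> coeff (UP R) q j \<in> nilpotents R"
    using reflect p q by (simp add: UR.coeff_closed)
qed

lemma nilpotents_carrier_update:
  "H \<subseteq> carrier R \<Longrightarrow> nilpotents (R\<lparr>carrier := H\<rparr>) = nilpotents R \<inter> H"
  by (auto simp: nilpotents_def nat_pow_def)

lemma (in ring) nat_pow_eq_zero_mono: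
  fixes m n :: nat
  assumes "x \<in> carrier R" and "x [^] m = \<zero>" and "m \<le> n"
  shows "x [^] n = \<zero>"
proof -
  have "x [^] n = x [^] m \<otimes> x [^] (n - m)"
    using assms(1,3) by (simp add: nat_pow_mult)
  with assms show ?thesis
    by simp
qed

lemma (in ring) nilpotent_of_nat_pow:
  fixes n :: nat
  assumes x: "x \<in> carrier R" and "x [^] n \<in> nilpotents R"
  shows "x \<in> nilpotents R"
proof -
  from assms obtain m :: nat where "(x [^] n) [^] m = \<zero>"
    unfolding nilpotents_def by auto
  then have "x [^] (n * m) = \<zero>"
    using x by (simp add: nat_pow_pow)
  with x show ?thesis
    unfolding nilpotents_def by auto
qed

lemma mult_RDirProd [simp]:
  "(a, b) \<otimes>\<^bsub>RDirProd A B\<^esub> (c, d) = (a \<otimes>\<^bsub>A\<^esub> c, b \<otimes>\<^bsub>B\<^esub> d)"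
  by (simp add: RDirProd_def monoid.defs)

lemma add_RDirProd [simp]:
  "(a, b) \<oplus>\<^bsub>RDirProd A B\<^esub> (c, d) = (a \<oplus>\<^bsub>A\<^esub> c, b \<oplus>\<^bsub>B\<^esub> d)"
  by (simp add: RDirProd_def monoid.defs)

lemma one_RDirProd [simp]: "\<one>\<^bsub>RDirProd A B\<^esub> = (\<one>\<^bsub>A\<^esub>, \<one>\<^bsub>B\<^esub>)"
  by (simp add: RDirProd_def monoid.defs)

lemma zero_RDirProd [simp]: "\<zero>\<^bsub>RDirProd A B\<^esub> = (\<zero>\<^bsub>A\<^esub>, \<zero>\<^bsub>B\<^esub>)"
  by (simp add: RDirProd_def monoid.defs)

lemma nat_pow_RDirProd [simp]:
  "(a, b) [^]\<^bsub>RDirProd A B\<^esub> (n::nat) = (a [^]\<^bsub>A\<^esub> n, b [^]\<^bsub>B\<^esub> n)"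
  by (induction n) simp_all

lemma a_inv_RDirProd:
  assumes "ring A" and "ring B" and "a \<in> carrier A" and "b \<in> carrier B"
  shows "\<ominus>\<^bsub>RDirProd A B\<^esub> (a, b) = (\<ominus>\<^bsub>A\<^esub> a, \<ominus>\<^bsub>B\<^esub> b)"
proof -
  interpret AB: ring "RDirProd A B"
    using RDirProd_ring assms by blast
  show ?thesis
    using assms by (intro AB.minus_equality) (auto simp: RDirProd_carrier ring.ring_simprules)
qed

lemma RDirProd_nilpotentI:
  assumes A: "ring A" and B: "ring B" and a: "a \<in> nilpotents A" and b: "b \<in> nilpotents B"
  shows "(a, b) \<in> nilpotents (RDirProd A B)"
proof -
  from a obtain m :: nat where a_carrier: "a \<in> carrier A" and "a [^]\<^bsub>A\<^esub> m = \<zero>\<^bsub>A\<^esub>"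
    unfolding nilpotents_def by auto
  then have "a [^]\<^bsub>A\<^esub> (m + n) = \<zero>\<^bsub>A\<^esub>" for n
    by (simp add: ring.nat_pow_eq_zero_mono[OF A])
  moreover from b obtain n :: nat where b_carrier: "b \<in> carrier B" and "b [^]\<^bsub>B\<^esub> n = \<zero>\<^bsub>B\<^esub>"
    unfolding nilpotents_def by auto
  then have "b [^]\<^bsub>B\<^esub> (m + n) = \<zero>\<^bsub>B\<^esub>"
    by (simp add: ring.nat_pow_eq_zero_mono[OF B])
  ultimately show ?thesis
    using a_carrier b_carrier unfolding nilpotents_def by (auto simp: RDirProd_carrier)
qed

locale ring_hom_ideal = A: ring A + B: ring B + J: ideal J B
  for A :: "('a, 'm) ring_scheme" and B :: "('b, 'n) ring_scheme" and J +
  fixes f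
  assumes hom: "f \<in> ring_hom A B"
begin

sublocale ring_hom_ring A B f
  by unfold_locales (rule hom)

lemma hom_plus_ideal_add:
  assumes "a \<in> carrier A" "a' \<in> carrier A" "j \<in> J" "j' \<in> J"
  shows "(f a \<oplus>\<^bsub>B\<^esub> j) \<oplus>\<^bsub>B\<^esub> (f a' \<oplus>\<^bsub>B\<^esub> j') = f (a \<oplus>\<^bsub>A\<^esub> a') \<oplus>\<^bsub>B\<^esub> (j \<oplus>\<^bsub>B\<^esub> j')"
  using assms by (simp add: J.Icarr B.a_ac)

lemma hom_plus_ideal_a_inv:
  assumes "a \<in> carrier A" "j \<in> J"
  shows "\<ominus>\<^bsub>B\<^esub> (f a \<oplus>\<^bsub>B\<^esub> j) = f (\<ominus>\<^bsub>A\<^esub> a) \<oplus>\<^bsub>B\<^esub> \<ominus>\<^bsub>B\<^esub> j"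
  using assms by (simp add: J.Icarr B.minus_add hom_a_inv)

lemma hom_plus_ideal_mult:
  assumes a: "a \<in> carrier A" "a' \<in> carrier A" and j: "j \<in> J" "j' \<in> J"
  obtains w where "w \<in> J"
    and "(f a \<oplus>\<^bsub>B\<^esub> j) \<otimes>\<^bsub>B\<^esub> (f a' \<oplus>\<^bsub>B\<^esub> j') = f (a \<otimes>\<^bsub>A\<^esub> a') \<oplus>\<^bsub>B\<^esub> w"
proof
  show "(f a \<otimes>\<^bsub>B\<^esub> j' \<oplus>\<^bsub>B\<^esub> j \<otimes>\<^bsub>B\<^esub> f a') \<oplus>\<^bsub>B\<^esub> j \<otimes>\<^bsub>B\<^esub> j' \<in> J"
    using a j by (intro J.a_closed J.I_l_closed J.I_r_closed) auto
  show "(f a \<oplus>\<^bsub>B\<^esub> j) \<otimes>\<^bsub>B\<^esub> (f a' \<oplus>\<^bsub>B\<^esub> j')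
      = f (a \<otimes>\<^bsub>A\<^esub> a') \<oplus>\<^bsub>B\<^esub> ((f a \<otimes>\<^bsub>B\<^esub> j' \<oplus>\<^bsub>B\<^esub> j \<otimes>\<^bsub>B\<^esub> f a') \<oplus>\<^bsub>B\<^esub> j \<otimes>\<^bsub>B\<^esub> j')"
    using a j by (simp add: J.Icarr B.l_distr B.r_distr B.a_ac)
qed

lemma hom_plus_ideal_nat_pow:
  assumes a: "a \<in> carrier A" and j: "j \<in> J"
  obtains w where "w \<in> J" and "(f a \<oplus>\<^bsub>B\<^esub> j) [^]\<^bsub>B\<^esub> (n::nat) = f (a [^]\<^bsub>A\<^esub> n) \<oplus>\<^bsub>B\<^esub> w"
proof (induction n arbitrary: thesis)
  case 0
  show ?case
    using 0[of "\<zero>\<^bsub>B\<^esub>"] by (simp add: J.zero_closed)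
next
  case (Suc n)
  obtain w where w: "w \<in> J" and pow_n: "(f a \<oplus>\<^bsub>B\<^esub> j) [^]\<^bsub>B\<^esub> n = f (a [^]\<^bsub>A\<^esub> n) \<oplus>\<^bsub>B\<^esub> w"
    using Suc.IH .
  obtain w' where "w' \<in> J"
    and "(f (a [^]\<^bsub>A\<^esub> n) \<oplus>\<^bsub>B\<^esub> w) \<otimes>\<^bsub>B\<^esub> (f a \<oplus>\<^bsub>B\<^esub> j) = f (a [^]\<^bsub>A\<^esub> n \<otimes>\<^bsub>A\<^esub> a) \<oplus>\<^bsub>B\<^esub> w'"
    using hom_plus_ideal_mult[of "a [^]\<^bsub>A\<^esub> n" a w j] a j w by auto
  with pow_n show ?case
    by (intro Suc.prems[of w']) simp_all
qed

lemma image_plus_idealI: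
  "a \<in> carrier A \<Longrightarrow> j \<in> J \<Longrightarrow> f a \<oplus>\<^bsub>B\<^esub> j \<in> carrier (image_plus_ideal A B f J)"
  by (auto simp: image_plus_ideal_def)

lemma subring_image_plus_ideal: "subring (carrier (image_plus_ideal A B f J)) B"
proof (rule B.subringI)
  show "carrier (image_plus_ideal A B f J) \<subseteq> carrier B"
    by (auto simp: image_plus_ideal_def J.Icarr)
  show "\<one>\<^bsub>B\<^esub> \<in> carrier (image_plus_ideal A B f J)"
    using image_plus_idealI[OF A.one_closed J.zero_closed] by simp
next
  fix x y
  assume "x \<in> carrier (image_plus_ideal A B f J)" and "y \<in> carrier (image_plus_ideal A B f J)"
  then obtain a j a' j' where x: "x = f a \<oplus>\<^bsub>B\<^esub> j" "a \<in> carrier A" "j \<in> J"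
    and y: "y = f a' \<oplus>\<^bsub>B\<^esub> j'" "a' \<in> carrier A" "j' \<in> J"
    by (auto simp: image_plus_ideal_def)
  show "\<ominus>\<^bsub>B\<^esub> x \<in> carrier (image_plus_ideal A B f J)"
    unfolding x(1) hom_plus_ideal_a_inv[OF x(2,3)]
    by (intro image_plus_idealI A.a_inv_closed J.a_inv_closed x(2,3))
  show "x \<oplus>\<^bsub>B\<^esub> y \<in> carrier (image_plus_ideal A B f J)"
    unfolding x(1) y(1) hom_plus_ideal_add[OF x(2) y(2) x(3) y(3)]
    by (intro image_plus_idealI A.a_closed J.a_closed x(2,3) y(2,3))
  obtain w where "w \<in> J" and "x \<otimes>\<^bsub>B\<^esub> y = f (a \<otimes>\<^bsub>A\<^esub> a') \<oplus>\<^bsub>B\<^esub> w"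
    using hom_plus_ideal_mult x y by metis
  then show "x \<otimes>\<^bsub>B\<^esub> y \<in> carrier (image_plus_ideal A B f J)"
    using image_plus_idealI A.m_closed[OF x(2) y(2)] by metis
qed

lemma amalgamationI:
  "a \<in> carrier A \<Longrightarrow> j \<in> J \<Longrightarrow> (a, f a \<oplus>\<^bsub>B\<^esub> j) \<in> carrier (amalgamation A B f J)"
  by (auto simp: amalgamation_def)

lemma subring_amalgamation: "subring (carrier (amalgamation A B f J)) (RDirProd A B)"
proof -
  interpret AB: ring "RDirProd A B"
    using RDirProd_ring A.ring_axioms B.ring_axioms .
  show ?thesis
  proof (rule AB.subringI)
    show "carrier (amalgamation A B f J) \<subseteq> carrier (RDirProd A B)"
      by (auto simp: amalgamation_def RDirProd_carrier J.Icarr)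
    show "\<one>\<^bsub>RDirProd A B\<^esub> \<in> carrier (amalgamation A B f J)"
      using amalgamationI[OF A.one_closed J.zero_closed] by simp
  next
    fix x y
    assume "x \<in> carrier (amalgamation A B f J)" and "y \<in> carrier (amalgamation A B f J)"
    then obtain a j a' j' where x: "x = (a, f a \<oplus>\<^bsub>B\<^esub> j)" "a \<in> carrier A" "j \<in> J"
      and y: "y = (a', f a' \<oplus>\<^bsub>B\<^esub> j')" "a' \<in> carrier A" "j' \<in> J"
      by (auto simp: amalgamation_def)
    have "\<ominus>\<^bsub>RDirProd A B\<^esub> x = (\<ominus>\<^bsub>A\<^esub> a, f (\<ominus>\<^bsub>A\<^esub> a) \<oplus>\<^bsub>B\<^esub> \<ominus>\<^bsub>B\<^esub> j)"
      using x by (simp add: a_inv_RDirProd A.ring_axioms B.ring_axioms J.Icarr B.minus_add)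
    then show "\<ominus>\<^bsub>RDirProd A B\<^esub> x \<in> carrier (amalgamation A B f J)"
      using amalgamationI A.a_inv_closed J.a_inv_closed x(2,3) by metis
    have "x \<oplus>\<^bsub>RDirProd A B\<^esub> y = (a \<oplus>\<^bsub>A\<^esub> a', f (a \<oplus>\<^bsub>A\<^esub> a') \<oplus>\<^bsub>B\<^esub> (j \<oplus>\<^bsub>B\<^esub> j'))"
      using x y by (simp add: J.Icarr B.a_ac)
    then show "x \<oplus>\<^bsub>RDirProd A B\<^esub> y \<in> carrier (amalgamation A B f J)"
      using amalgamationI A.a_closed J.a_closed x(2,3) y(2,3) by metis
    obtain w where "w \<in> J" and "(f a \<oplus>\<^bsub>B\<^esub> j) \<otimes>\<^bsub>B\<^esub> (f a' \<oplus>\<^bsub>B\<^esub> j') = f (a \<otimes>\<^bsub>A\<^esub> a') \<oplus>\<^bsub>B\<^esub> w"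
      using hom_plus_ideal_mult x y by metis
    then show "x \<otimes>\<^bsub>RDirProd A B\<^esub> y \<in> carrier (amalgamation A B f J)"
      using amalgamationI A.m_closed[OF x(2) y(2)] x(1) y(1) by (metis mult_RDirProd)
  qed
qed

lemma ring_amalgamation: "ring (amalgamation A B f J)"
  using ring.subring_is_ring[OF RDirProd_ring[OF A.ring_axioms B.ring_axioms] subring_amalgamation]
  by (simp add: amalgamation_def)

lemma ring_image_plus_ideal: "ring (image_plus_ideal A B f J)"
  using B.subring_is_ring[OF subring_image_plus_ideal] by (simp add: image_plus_ideal_def)

lemma snd_image_amalgamation: "snd ` carrier (amalgamation A B f J) = carrier (image_plus_ideal A B f J)"
proof
  show "snd ` carrier (amalgamation A B f J) \<subseteq> carrier (image_plus_ideal A B f J)"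
    by (auto simp: amalgamation_def image_plus_idealI)
  show "carrier (image_plus_ideal A B f J) \<subseteq> snd ` carrier (amalgamation A B f J)"
    by (auto simp: image_plus_ideal_def intro!: image_eqI[OF _ amalgamationI])
qed

lemma ring_hom_ring_snd_amalgamation:
  "ring_hom_ring (amalgamation A B f J) (image_plus_ideal A B f J) snd"
proof (rule ring_hom_ringI2[OF ring_amalgamation ring_image_plus_ideal ring_hom_memI])
  show "snd x \<in> carrier (image_plus_ideal A B f J)" if "x \<in> carrier (amalgamation A B f J)" for x
    using that snd_image_amalgamation by blast
  show "snd (x \<otimes>\<^bsub>amalgamation A B f J\<^esub> y) = snd x \<otimes>\<^bsub>image_plus_ideal A B f J\<^esub> snd y"
    and "snd (x \<oplus>\<^bsub>amalgamation A B f J\<^esub> y) = snd x \<oplus>\<^bsub>image_plus_ideal A B f J\<^esub> snd y" for x y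
    by (cases x, cases y, simp add: amalgamation_def image_plus_ideal_def)+
  show "snd \<one>\<^bsub>amalgamation A B f J\<^esub> = \<one>\<^bsub>image_plus_ideal A B f J\<^esub>"
    by (simp add: amalgamation_def image_plus_ideal_def)
qed

lemma amalgamation_nilpotentI:
  assumes nil: "{a \<in> carrier A. f a \<in> J} \<subseteq> nilpotents A"
    and x: "x \<in> carrier (amalgamation A B f J)"
    and snd_nil: "snd x \<in> nilpotents (image_plus_ideal A B f J)"
  shows "x \<in> nilpotents (amalgamation A B f J)"
proof -
  obtain a j where x_eq: "x = (a, f a \<oplus>\<^bsub>B\<^esub> j)" and a: "a \<in> carrier A" and j: "j \<in> J"
    using x by (auto simp: amalgamation_def)
  have b_nil: "f a \<oplus>\<^bsub>B\<^esub> j \<in> nilpotents B"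
    using snd_nil subringE(1)[OF subring_image_plus_ideal]
    by (simp add: x_eq image_plus_ideal_def nilpotents_carrier_update)
  then obtain n :: nat where "(f a \<oplus>\<^bsub>B\<^esub> j) [^]\<^bsub>B\<^esub> n = \<zero>\<^bsub>B\<^esub>"
    unfolding nilpotents_def by auto
  moreover obtain w where w: "w \<in> J" and "(f a \<oplus>\<^bsub>B\<^esub> j) [^]\<^bsub>B\<^esub> n = f (a [^]\<^bsub>A\<^esub> n) \<oplus>\<^bsub>B\<^esub> w"
    using hom_plus_ideal_nat_pow[OF a j] .
  ultimately have "\<ominus>\<^bsub>B\<^esub> w = f (a [^]\<^bsub>A\<^esub> n)"
    using a w by (intro B.minus_equality) (auto simp: J.Icarr)
  then have "f (a [^]\<^bsub>A\<^esub> n) \<in> J"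
    using J.a_inv_closed[OF w] by simp
  then have "a [^]\<^bsub>A\<^esub> n \<in> nilpotents A"
    using nil a by auto
  then have "a \<in> nilpotents A"
    using A.nilpotent_of_nat_pow[OF a] by blast
  then have "x \<in> nilpotents (RDirProd A B)"
    unfolding x_eq using b_nil by (intro RDirProd_nilpotentI A.ring_axioms B.ring_axioms)
  then show ?thesis
    using x subringE(1)[OF subring_amalgamation]
    by (simp add: amalgamation_def nilpotents_carrier_update)
qed

end

theorem theorem3p1:
  fixes A :: "('a, 'm) ring_scheme" and B :: "('b, 'n) ring_scheme"
    and f :: "'a \<Rightarrow> 'b" and J :: "'b set"
  assumes "ring A" and "ring B"
    and "f \<in> ring_hom A B"
    and "ideal J B" and "J \<noteq> carrier B"
    and "{a \<in> carrier A. f a \<in> J} \<subseteq> nilpotents A"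
  shows "nil_Armendariz (amalgamation A B f J) \<longleftrightarrow> nil_Armendariz (image_plus_ideal A B f J)"
proof -
  interpret ring_hom_ideal A B J f
    using assms by (simp add: ring_hom_ideal_def ring_hom_ideal_axioms_def)
  note snd_hom = ring_hom_ring_snd_amalgamation
  have reflect: "\<And>x. x \<in> carrier (amalgamation A B f J) \<Longrightarrow>
      snd x \<in> nilpotents (image_plus_ideal A B f J) \<Longrightarrow> x \<in> nilpotents (amalgamation A B f J)"
    using amalgamation_nilpotentI[OF assms(6)] .
  show ?thesis
    using nil_Armendariz_surj_hom_image[OF snd_hom _ snd_image_amalgamation reflect]
      nil_Armendariz_of_hom_reflecting_nilpotents[OF snd_hom _ reflect]
    by blast
qed

end
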